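(* Let $\mathcal{P}=\{\xi\in\mathbb{R}^r: C\xi\le d\}$ be a compact polytope with $C\in\mathbb{R}^{q\times r}$ and $d\in\mathbb{R}^q$ with all entries strictly positive, and let $w\in\mathbb{R}^q$ have nonnegative entries with $C^\top\mathrm{diag}(1/d^1,\dots,1/d^q)(\mathds{1}+w)=0$. For $\delta\in(0,\min_i d^i]$ let $\hat{B}_{\mathcal{P}}(\xi)=\sum_{i=1}^q(1+w^i)\big(\hat{B}(-C^i\xi+d^i)+\ln d^i\big)$, where $\hat{B}(z)=-\ln z$ for $z>\delta$ and $\hat{B}(z)=\tfrac12[((z-2\delta)/\delta)^2-1]-\ln\delta$ for $z\le\delta$, and let $\bar{\beta}(\delta):=\min_{i\in\{1,\dots,q\},\,\xi\in\mathbb{R}^r}\{\hat{B}_{\mathcal{P}}(\xi): C^i\xi=d^i\}$. Then $\bar{\beta}(\cdot)$ is a continuous function of $\delta$, and for every such $\delta$ the sublevel set $\{\xi\in\mathbb{R}^r:\hat{B}_{\mathcal{P}}(\xi)\le\bar{\beta}(\delta)\}$ is contained in $\mathcal{P}$.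
   Context: $C^i$ and $d^i$ denote the $i$-th row of $C$ and $i$-th entry of $d$; $\mathds{1}$ is the all-ones vector. The relaxation parameter $\delta$ enters $\hat{B}_{\mathcal{P}}$ through $\hat{B}$. *)

theory Defs
  imports "HOL-Analysis.Analysis"
begin

definition polytope :: "real^'r^'q \<Rightarrow> real^'q \<Rightarrow> (real^'r) set" where
  "polytope C d = {\<xi>. \<forall>i. C $ i \<bullet> \<xi> \<le> d $ i}"

definition Bhat :: "real \<Rightarrow> real \<Rightarrow> real" where
  "Bhat \<delta> z = (if z > \<delta> then - ln z
                 else (1/2) * (((z - 2*\<delta>) / \<delta>)^2 - 1) - ln \<delta>)"

definition BhatP :: "real^'r^'q \<Rightarrow> real^'q \<Rightarrow> real^'q \<Rightarrow> real \<Rightarrow> real^'r \<Rightarrow> real" where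
  "BhatP C d w \<delta> \<xi> = (\<Sum>i\<in>UNIV. (1 + w $ i) * (Bhat \<delta> (- (C $ i \<bullet> \<xi>) + d $ i) + ln (d $ i)))"

text \<open>beta-bar(delta): the minimum (rendered as infimum) of BhatP over the facet hyperplanes.\<close>
definition betabar :: "real^'r^'q \<Rightarrow> real^'q \<Rightarrow> real^'q \<Rightarrow> real \<Rightarrow> real" where
  "betabar C d w \<delta> = Inf {BhatP C d w \<delta> \<xi> | i \<xi>. C $ i \<bullet> \<xi> = d $ i}"

end

theory Submission
  imports Defs
begin

text \<open>
  The balance condition \<open>C\<^sup>T diag(1/d) (1 + w) = 0\<close> lets one add to every summand of
  \<open>BhatP\<close> the linear term \<open>(1 + w\<^sup>i) C\<^sup>i \<xi> / d\<^sup>i\<close> without changing the sum.  The summand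
  then becomes \<open>1 + w\<^sup>i\<close> times the gap between the convex function \<open>Bhat \<delta>\<close> and its tangent
  at \<open>d\<^sup>i \<ge> \<delta>\<close>, evaluated at \<open>d\<^sup>i - C\<^sup>i \<xi>\<close>.  Hence \<open>BhatP\<close> is nonnegative, vanishes at the
  origin, and is at least \<open>1/2\<close> on every facet hyperplane, where the argument is \<open>0\<close>.

  If \<open>\<xi>\<close> violates the constraint \<open>i\<close>, the point \<open>t \<xi>\<close> with \<open>t = d\<^sup>i / C\<^sup>i \<xi> < 1\<close> lies on that
  hyperplane, and convexity gives \<open>BhatP (t \<xi>) \<le> t BhatP \<xi> \<le> t \<beta>(\<delta>) \<le> t BhatP (t \<xi>)\<close>, which
  is impossible as \<open>BhatP (t \<xi>) > 0\<close>.

  For continuity, \<open>\<beta>\<close> is antitone in \<open>\<delta>\<close>, and the scaling law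
  \<open>Bhat (l \<delta>) z = Bhat \<delta> (z / l) - ln l\<close> bounds \<open>BhatP \<delta> - BhatP (l \<delta>)\<close> by
  \<open>2 l (l - 1) BhatP (l \<delta>) + W ln l\<close>; on every interval \<open>[p, m]\<close> this makes \<open>\<beta>\<close> Lipschitz.
\<close>

lemma Bhat_eq_quadratic: "z \<le> \<delta> \<Longrightarrow> Bhat \<delta> z = (1/2) * (((z - 2*\<delta>) / \<delta>)^2 - 1) - ln \<delta>"
  by (simp add: Bhat_def)

lemma Bhat_eq_neg_ln: "\<delta> < z \<Longrightarrow> Bhat \<delta> z = - ln z"
  by (simp add: Bhat_def)

lemma Bhat_eq_neg_ln_of_ge: "0 < \<delta> \<Longrightarrow> \<delta> \<le> c \<Longrightarrow> Bhat \<delta> c = - ln c"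
  by (cases "\<delta> < c") (auto simp: Bhat_def)

lemma Bhat_scale:
  assumes "0 < \<delta>" "0 < l"
  shows "Bhat (l * \<delta>) z = Bhat \<delta> (z / l) - ln l"
proof (cases "l * \<delta> < z")
  case True
  then have "\<delta> < z / l" using assms by (simp add: field_simps)
  moreover have "0 < z" using True assms by (smt (verit) mult_pos_pos)
  ultimately show ?thesis using True assms by (simp add: Bhat_eq_neg_ln ln_div)
next
  case False
  then have "\<not> \<delta> < z / l" using assms by (simp add: field_simps)
  with False assms show ?thesis by (simp add: Bhat_def ln_mult field_simps)
qed

lemma ln_diff_ge_linear:
  fixes \<delta> c z :: real
  assumes "0 < \<delta>" "\<delta> \<le> c" "z \<le> \<delta>"
  shows "z * (1/\<delta> - 1/c) \<le> ln c - ln \<delta>"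
proof -
  have "z * (1/\<delta> - 1/c) \<le> \<delta> * (1/\<delta> - 1/c)"
    using assms by (intro mult_right_mono) (auto simp: field_simps)
  also have "\<dots> = 1 - \<delta> / c" using assms by (simp add: field_simps)
  also have "\<dots> \<le> - ln (\<delta> / c)" using ln_le_minus_one[of "\<delta> / c"] assms by simp
  also have "\<dots> = ln c - ln \<delta>" using assms by (simp add: ln_div)
  finally show ?thesis .
qed

text \<open>For \<open>\<delta> \<le> c\<close> this is \<open>Bhat \<delta>\<close> minus its tangent line at \<open>c\<close>.\<close>

definition Bhat_tangent_gap :: "real \<Rightarrow> real \<Rightarrow> real \<Rightarrow> real" where
  "Bhat_tangent_gap \<delta> c z = Bhat \<delta> z + ln c + (z - c) / c"

lemma Bhat_tangent_gap_ge_quadratic: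
  assumes "0 < \<delta>" "\<delta> \<le> c" "z \<le> \<delta>"
  shows "(1 - z / \<delta>)^2 / 2 \<le> Bhat_tangent_gap \<delta> c z"
proof -
  define u where "u = z / \<delta>"
  have u: "(z - 2*\<delta>) / \<delta> = u - 2"
    using assms by (simp add: u_def field_simps)
  have "Bhat \<delta> z = (1 - u)^2 / 2 - u + 1 - ln \<delta>"
    unfolding Bhat_eq_quadratic[OF assms(3)] u by (simp add: power2_eq_square field_simps)
  moreover have "z * (1/\<delta> - 1/c) = u - z / c" "(z - c) / c = z / c - 1"
    using assms by (simp_all add: u_def field_simps)
  ultimately have "(1 - u)^2 / 2 \<le> Bhat_tangent_gap \<delta> c z"
    using ln_diff_ge_linear[OF assms] unfolding Bhat_tangent_gap_def by linarith
  then show ?thesis by (simp only: u_def)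
qed

lemma Bhat_tangent_gap_nonneg:
  assumes "0 < \<delta>" "\<delta> \<le> c"
  shows "0 \<le> Bhat_tangent_gap \<delta> c z"
proof (cases "\<delta> < z")
  case True
  then have "ln z - ln c \<le> (z - c) / c" using assms by (intro ln_diff_le) auto
  with True show ?thesis by (simp add: Bhat_tangent_gap_def Bhat_eq_neg_ln)
next
  case False
  then have "(1 - z / \<delta>)^2 / 2 \<le> Bhat_tangent_gap \<delta> c z"
    using assms by (intro Bhat_tangent_gap_ge_quadratic) auto
  moreover have "0 \<le> (1 - z / \<delta>)^2 / 2" by simp
  ultimately show ?thesis by linarith
qed

lemma Bhat_supporting_line:
  assumes "0 < \<delta>"
  obtains s where "s \<le> 0" "\<And>z. Bhat \<delta> c + s * (z - c) \<le> Bhat \<delta> z"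
proof (cases "\<delta> < c")
  case True
  have "Bhat \<delta> c + (- 1/c) * (z - c) \<le> Bhat \<delta> z" for z
    using Bhat_tangent_gap_nonneg[of \<delta> c z] assms True
    by (simp add: Bhat_tangent_gap_def Bhat_eq_neg_ln field_simps)
  moreover have "- 1/c \<le> 0" using assms True by simp
  ultimately show ?thesis using that by blast
next
  case False
  define q where "q = (\<lambda>x. (1/2) * (((x - 2*\<delta>) / \<delta>)^2 - 1) - ln \<delta>)"
  define s where "s = (c - 2*\<delta>) / \<delta>^2"
  have tangent: "Bhat \<delta> c + s * (x - c) = q x - (x - c)^2 / (2*\<delta>^2)" for x
    using False assms by (simp add: Bhat_eq_quadratic s_def q_def field_simps power2_eq_square)
  have "Bhat \<delta> c + s * (z - c) \<le> Bhat \<delta> z" for z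
  proof (cases "z \<le> \<delta>")
    case True
    then show ?thesis by (simp add: tangent Bhat_eq_quadratic q_def)
  next
    case z: False
    have "(z - \<delta>)^2 \<le> (z - c)^2" using False z by (intro power_mono) auto
    then have "(z - \<delta>)^2 / (2*\<delta>^2) \<le> (z - c)^2 / (2*\<delta>^2)" by (simp add: divide_right_mono)
    moreover have "q z - (z - \<delta>)^2 / (2*\<delta>^2) = - ln \<delta> - (z - \<delta>) / \<delta>"
      using assms by (simp add: q_def field_simps power2_eq_square)
    moreover have "0 \<le> Bhat_tangent_gap \<delta> \<delta> z" using assms by (intro Bhat_tangent_gap_nonneg) auto
    ultimately show ?thesis by (simp add: tangent Bhat_tangent_gap_def)
  qed
  moreover have "s \<le> 0" using False assms by (simp add: s_def divide_nonpos_pos)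
  ultimately show ?thesis using that by blast
qed

lemma convex_on_Bhat: "0 < \<delta> \<Longrightarrow> convex_on UNIV (Bhat \<delta>)"
proof (rule convex_onI)
  fix t x y :: real
  assume "0 < \<delta>" "0 < t" "t < 1"
  define m where "m = (1 - t) *\<^sub>R x + t *\<^sub>R y"
  obtain s where "\<And>z. Bhat \<delta> m + s * (z - m) \<le> Bhat \<delta> z"
    using Bhat_supporting_line[OF \<open>0 < \<delta>\<close>] by blast
  from mult_left_mono[OF this[of x], of "1 - t"] mult_left_mono[OF this[of y], of t] \<open>0 < t\<close> \<open>t < 1\<close>
  show "Bhat \<delta> m \<le> (1 - t) * Bhat \<delta> x + t * Bhat \<delta> y"
    by (simp add: m_def algebra_simps)
qed simp

lemma Bhat_antimono:
  assumes "0 < \<delta>" "z \<le> z'"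
  shows "Bhat \<delta> z' \<le> Bhat \<delta> z"
proof -
  obtain s where "s \<le> 0" "Bhat \<delta> z' + s * (z - z') \<le> Bhat \<delta> z"
    using Bhat_supporting_line[OF assms(1)] by metis
  moreover have "0 \<le> s * (z - z')" using calculation(1) assms(2) by (simp add: mult_nonpos_nonpos)
  ultimately show ?thesis by linarith
qed

lemma Bhat_one_plus_ln_mono:
  assumes "0 < u" "u \<le> v"
  shows "Bhat 1 u + ln u \<le> Bhat 1 v + ln v"
proof -
  define G where "G = (\<lambda>x::real. (x - 2)^2 / 2 - 1/2 + ln x)"
  have G_mono: "G x \<le> G y" if "0 < x" "x \<le> y" for x y
  proof (rule DERIV_nonneg_imp_nondecreasing[OF \<open>x \<le> y\<close>])
    fix t assume "x \<le> t" "t \<le> y"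
    with \<open>0 < x\<close> have "0 < t" by simp
    then have "DERIV G t :> (t - 1)^2 / t"
      unfolding G_def by (auto intro!: derivative_eq_intros simp: field_simps power2_eq_square)
    then show "\<exists>y. DERIV G t :> y \<and> 0 \<le> y" using \<open>0 < t\<close> by auto
  qed
  have Bhat_G: "Bhat 1 x + ln x = (if 1 < x then 0 else G x)" for x
    by (simp add: Bhat_def G_def)
  have "G 1 = 0" by (simp add: G_def)
  then show ?thesis
    using assms G_mono[of u v] G_mono[of u 1] by (auto simp: Bhat_G)
qed

lemma Bhat_antimono_delta:
  assumes "0 < \<delta>" "\<delta> \<le> \<delta>'"
  shows "Bhat \<delta>' z \<le> Bhat \<delta> z"
proof -
  have scale: "Bhat \<epsilon> z = Bhat 1 (z / \<epsilon>) - ln \<epsilon>" if "0 < \<epsilon>" for \<epsilon>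
    using Bhat_scale[of 1 \<epsilon> z] that by simp
  have "0 < \<delta>'" using assms by simp
  show ?thesis
  proof (cases "z \<le> 0")
    case True
    then have "Bhat 1 (z / \<delta>') \<le> Bhat 1 (z / \<delta>)"
      using assms by (intro Bhat_antimono) (auto intro: divide_left_mono_neg)
    moreover have "ln \<delta> \<le> ln \<delta>'" using assms by simp
    ultimately show ?thesis using scale[OF assms(1)] scale[OF \<open>0 < \<delta>'\<close>] by linarith
  next
    case False
    have "Bhat 1 (z / \<delta>') + ln (z / \<delta>') \<le> Bhat 1 (z / \<delta>) + ln (z / \<delta>)"
      using False assms by (intro Bhat_one_plus_ln_mono) (auto intro: divide_left_mono)
    then show ?thesis using scale assms \<open>0 < \<delta>'\<close> False by (simp add: ln_div)
  qed
qed

lemma quadratic_rescaling_bound: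
  fixes a l :: real
  assumes "1 \<le> l" "0 \<le> a"
  shows "(a + 2)^2 / 2 - (a / l + 2)^2 / 2 \<le> 2 * l * (l - 1) * ((1 + a / l)^2 / 2)"
proof -
  have l: "0 < l" using assms by simp
  have "a * ((l + 1) * a + 4 * l) \<le> 2 * (l * (l + a)^2)"
  proof -
    have "(l + 1) * a * a \<le> 2 * l * a * a" using assms by (intro mult_right_mono) auto
    moreover have "4 * l * a \<le> 4 * l * l * a" using assms by (simp add: mult_left_mono mult_right_mono)
    moreover have "0 \<le> 2 * l * l * l" using l by simp
    ultimately show ?thesis by (simp add: algebra_simps power2_eq_square)
  qed
  then have "(l - 1) * (a * ((l + 1) * a + 4 * l)) / (2 * l^2) \<le> (l - 1) * (2 * (l * (l + a)^2)) / (2 * l^2)"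
    using assms by (intro divide_right_mono mult_left_mono) auto
  moreover have "(a + 2)^2 / 2 - (a / l + 2)^2 / 2 = (l - 1) * (a * ((l + 1) * a + 4 * l)) / (2 * l^2)"
    using l by (simp add: field_simps power2_eq_square)
  moreover have "2 * l * (l - 1) * ((1 + a / l)^2 / 2) = (l - 1) * (2 * (l * (l + a)^2)) / (2 * l^2)"
    using l by (simp add: field_simps power2_eq_square)
  ultimately show ?thesis by simp
qed

lemma Bhat_diff_rescaled_le:
  assumes "0 < \<delta>" "1 \<le> l" "l * \<delta> \<le> c"
  shows "Bhat \<delta> z - Bhat (l * \<delta>) z \<le> ln l + 2 * l * (l - 1) * Bhat_tangent_gap (l * \<delta>) c z"
proof -
  have l: "0 < l" and l\<delta>: "0 < l * \<delta>" using assms by auto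
  have scale: "Bhat (l * \<delta>) z = Bhat \<delta> (z / l) - ln l" by (rule Bhat_scale[OF assms(1) l])
  have coef: "0 \<le> 2 * l * (l - 1)" using assms by simp
  show ?thesis
  proof (cases "0 < z")
    case True
    then have "Bhat \<delta> z \<le> Bhat \<delta> (z / l)"
      using assms by (intro Bhat_antimono) (auto simp: divide_le_eq)
    moreover have "0 \<le> 2 * l * (l - 1) * Bhat_tangent_gap (l * \<delta>) c z"
      using coef Bhat_tangent_gap_nonneg[OF l\<delta> assms(3)] by simp
    ultimately show ?thesis using scale by linarith
  next
    case False
    define a where "a = - z / \<delta>"
    have a: "0 \<le> a" using False assms by (simp add: a_def divide_nonpos_pos)
    have "z / l \<le> \<delta>" using False assms l by (smt (verit) divide_nonpos_pos)
    have "Bhat \<delta> z = (a + 2)^2 / 2 - 1/2 - ln \<delta>"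
      using False assms by (simp add: Bhat_eq_quadratic a_def field_simps power2_eq_square)
    moreover have "Bhat \<delta> (z / l) = (a / l + 2)^2 / 2 - 1/2 - ln \<delta>"
      unfolding Bhat_eq_quadratic[OF \<open>z / l \<le> \<delta>\<close>] using assms l
      by (simp add: a_def field_simps power2_eq_square)
    moreover have "(1 + a / l)^2 / 2 \<le> Bhat_tangent_gap (l * \<delta>) c z"
      using Bhat_tangent_gap_ge_quadratic[OF l\<delta> assms(3), of z] False l\<delta>
      by (simp add: a_def field_simps)
    then have "2 * l * (l - 1) * ((1 + a / l)^2 / 2) \<le> 2 * l * (l - 1) * Bhat_tangent_gap (l * \<delta>) c z"
      using coef by (rule mult_left_mono)
    ultimately show ?thesis
      using quadratic_rescaling_bound[OF assms(2) a] scale by linarith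
  qed
qed

lemma continuous_on_from_rescaling_bound:
  fixes \<beta> :: "real \<Rightarrow> real" and m W :: real
  assumes antimono: "\<And>a b. a \<in> {0<..m} \<Longrightarrow> b \<in> {0<..m} \<Longrightarrow> a \<le> b \<Longrightarrow> \<beta> b \<le> \<beta> a"
    and nonneg: "\<And>a. a \<in> {0<..m} \<Longrightarrow> 0 \<le> \<beta> a"
    and "0 \<le> W"
    and bound: "\<And>a b. a \<in> {0<..m} \<Longrightarrow> b \<in> {0<..m} \<Longrightarrow> a \<le> b \<Longrightarrow>
      \<beta> a \<le> (1 + 2 * (b/a) * (b/a - 1)) * \<beta> b + W * ln (b/a)"
  shows "continuous_on {0<..m} \<beta>"
proof -
  have lipschitz: "((2 * (m/p) * \<beta> p + W) / p)-lipschitz_on {p..m} \<beta>" if p: "0 < p" "p \<le> m" for p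
  proof (rule lipschitz_onI)
    define K where "K = 2 * (m/p) * \<beta> p + W"
    have K: "0 \<le> K" using nonneg[of p] p \<open>0 \<le> W\<close> by (simp add: K_def)
    then show "0 \<le> K / p" using p by simp
    have diff: "\<beta> a - \<beta> b \<le> K / p * (b - a)" if ab: "a \<in> {p..m}" "b \<in> {p..m}" "a \<le> b" for a b
    proof -
      define l where "l = b / a"
      have a: "0 < a" "a \<in> {0<..m}" and b: "b \<in> {0<..m}" using ab \<open>0 < p\<close> by auto
      have l: "1 \<le> l" "l \<le> m / p"
        using ab a \<open>0 < p\<close> by (auto simp: l_def intro!: frac_le)
      have "\<beta> a - \<beta> b \<le> 2 * l * (l - 1) * \<beta> b + W * ln l"
        using bound[OF a(2) b ab(3)] by (simp add: l_def algebra_simps)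
      also have "\<dots> \<le> 2 * (m/p) * (l - 1) * \<beta> p + W * (l - 1)"
      proof (intro add_mono mult_mono mult_left_mono)
        show "\<beta> b \<le> \<beta> p" using antimono[of p b] ab \<open>0 < p\<close> by auto
        show "ln l \<le> l - 1" using l by (intro ln_le_minus_one) simp
      qed (use l nonneg[OF b] \<open>0 \<le> W\<close> p in auto)
      also have "\<dots> = K * ((b - a) / a)"
        using a by (simp add: K_def l_def diff_divide_distrib algebra_simps)
      also have "\<dots> \<le> K * ((b - a) / p)"
        using ab K \<open>0 < p\<close> by (intro mult_left_mono divide_left_mono) auto
      finally show ?thesis by simp
    qed
    fix x y assume "x \<in> {p..m}" "y \<in> {p..m}"
    then show "dist (\<beta> x) (\<beta> y) \<le> K / p * dist x y"
      using diff[of x y] diff[of y x] antimono[of x y] antimono[of y x] \<open>0 < p\<close>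
      by (cases "x \<le> y") (auto simp: dist_real_def)
  qed
  show ?thesis
    unfolding continuous_on_eq_continuous_within
  proof
    fix x assume x: "x \<in> {0<..m}"
    have "at x within {0<..m} = at x within {x/2..m}"
      using x by (intro at_within_nhd[of x "{x/2<..}"]) auto
    moreover have "continuous (at x within {x/2..m}) \<beta>"
      using x by (intro lipschitz_on_continuous_within[OF lipschitz]) auto
    ultimately show "continuous (at x within {0<..m}) \<beta>" by simp
  qed
qed

lemma admissible_delta_iff:
  fixes d :: "real^'q"
  shows "\<delta> \<in> {0<..Min (range (\<lambda>i. d $ i))} \<longleftrightarrow> 0 < \<delta> \<and> (\<forall>i. \<delta> \<le> d $ i)"
  by auto

locale facet_barrier =
  fixes C :: "real^'r^'q" and d w :: "real^'q"
  assumes d_pos: "\<And>i. 0 < d $ i"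
    and w_nonneg: "\<And>i. 0 \<le> w $ i"
    and balanced: "transpose C *v (\<chi> i. (1 / d $ i) * (1 + w $ i)) = 0"
begin

lemma weighted_rows_sum_zero: "(\<Sum>j\<in>UNIV. (1 + w $ j) / d $ j * (C $ j \<bullet> \<eta>)) = 0"
proof -
  define a where "a = (\<chi> i. (1 / d $ i) * (1 + w $ i))"
  have "a \<bullet> (C *v \<eta>) = (a v* C) \<bullet> \<eta>" by (simp add: dot_lmul_matrix)
  also have "\<dots> = 0" using balanced by (simp add: a_def)
  finally show ?thesis by (simp add: a_def inner_vec_def matrix_vector_mult_def)
qed

lemma BhatP_eq_sum_tangent_gap:
  "BhatP C d w \<delta> \<eta> = (\<Sum>j\<in>UNIV. (1 + w $ j) * Bhat_tangent_gap \<delta> (d $ j) (- (C $ j \<bullet> \<eta>) + d $ j))"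
proof -
  have "(1 + w $ j) * Bhat_tangent_gap \<delta> (d $ j) (- (C $ j \<bullet> \<eta>) + d $ j)
      = (1 + w $ j) * (Bhat \<delta> (- (C $ j \<bullet> \<eta>) + d $ j) + ln (d $ j)) - (1 + w $ j) / d $ j * (C $ j \<bullet> \<eta>)"
    for j using d_pos[of j] by (simp add: Bhat_tangent_gap_def field_simps)
  then show ?thesis
    using weighted_rows_sum_zero[of \<eta>] by (simp add: BhatP_def sum_subtractf)
qed

lemma one_plus_w_ge_one: "1 \<le> 1 + w $ j"
  using w_nonneg[of j] by simp

lemma BhatP_term_nonneg:
  assumes "0 < \<delta>" "\<And>i. \<delta> \<le> d $ i"
  shows "0 \<le> (1 + w $ j) * Bhat_tangent_gap \<delta> (d $ j) z"
  using Bhat_tangent_gap_nonneg[OF assms(1,2)] one_plus_w_ge_one[of j] by simp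

lemma BhatP_nonneg:
  assumes "0 < \<delta>" "\<And>i. \<delta> \<le> d $ i"
  shows "0 \<le> BhatP C d w \<delta> \<eta>"
  unfolding BhatP_eq_sum_tangent_gap using BhatP_term_nonneg[OF assms] by (simp add: sum_nonneg)

lemma BhatP_on_facet_ge_half:
  assumes "0 < \<delta>" "\<And>i. \<delta> \<le> d $ i" and facet: "C $ i \<bullet> \<eta> = d $ i"
  shows "1/2 \<le> BhatP C d w \<delta> \<eta>"
proof -
  have "1/2 \<le> Bhat_tangent_gap \<delta> (d $ i) (- (C $ i \<bullet> \<eta>) + d $ i)"
    using Bhat_tangent_gap_ge_quadratic[OF assms(1,2), of 0] facet assms(1) by simp
  also have "\<dots> \<le> (1 + w $ i) * Bhat_tangent_gap \<delta> (d $ i) (- (C $ i \<bullet> \<eta>) + d $ i)"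
    using calculation one_plus_w_ge_one[of i] by (intro mult_le_cancel_right1[THEN iffD2]) auto
  also have "\<dots> \<le> BhatP C d w \<delta> \<eta>"
    unfolding BhatP_eq_sum_tangent_gap by (rule member_le_sum) (auto intro: BhatP_term_nonneg[OF assms(1,2)])
  finally show ?thesis .
qed

lemma BhatP_scaleR_le:
  assumes "0 < \<delta>" "\<And>i. \<delta> \<le> d $ i" "0 \<le> t" "t \<le> 1"
  shows "BhatP C d w \<delta> (t *\<^sub>R \<xi>) \<le> t * BhatP C d w \<delta> \<xi>"
  unfolding BhatP_def sum_distrib_left
proof (rule sum_mono)
  fix j
  have "- (C $ j \<bullet> (t *\<^sub>R \<xi>)) + d $ j = (1 - t) *\<^sub>R d $ j + t *\<^sub>R (- (C $ j \<bullet> \<xi>) + d $ j)"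
    by (simp add: algebra_simps)
  then have "Bhat \<delta> (- (C $ j \<bullet> (t *\<^sub>R \<xi>)) + d $ j)
      \<le> (1 - t) * Bhat \<delta> (d $ j) + t * Bhat \<delta> (- (C $ j \<bullet> \<xi>) + d $ j)"
    using convex_onD[OF convex_on_Bhat[OF assms(1)]] assms(3,4) by simp
  then have "Bhat \<delta> (- (C $ j \<bullet> (t *\<^sub>R \<xi>)) + d $ j) + ln (d $ j)
      \<le> t * (Bhat \<delta> (- (C $ j \<bullet> \<xi>) + d $ j) + ln (d $ j))"
    using Bhat_eq_neg_ln_of_ge[OF assms(1,2)] by (simp add: algebra_simps)
  from mult_left_mono[OF this, of "1 + w $ j"] one_plus_w_ge_one[of j]
  show "(1 + w $ j) * (Bhat \<delta> (- (C $ j \<bullet> (t *\<^sub>R \<xi>)) + d $ j) + ln (d $ j))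
      \<le> t * ((1 + w $ j) * (Bhat \<delta> (- (C $ j \<bullet> \<xi>) + d $ j) + ln (d $ j)))"
    by (simp add: algebra_simps)
qed

lemma BhatP_antimono_delta:
  assumes "0 < \<delta>" "\<delta> \<le> \<delta>'"
  shows "BhatP C d w \<delta>' \<eta> \<le> BhatP C d w \<delta> \<eta>"
  unfolding BhatP_def
  using Bhat_antimono_delta[OF assms] one_plus_w_ge_one
  by (intro sum_mono mult_left_mono) auto

lemma BhatP_rescaled_bound:
  assumes "0 < \<delta>" "\<delta> \<le> \<delta>'" "\<And>i. \<delta>' \<le> d $ i"
  shows "BhatP C d w \<delta> \<eta> \<le> (1 + 2 * (\<delta>'/\<delta>) * (\<delta>'/\<delta> - 1)) * BhatP C d w \<delta>' \<eta>
      + (\<Sum>j\<in>UNIV. 1 + w $ j) * ln (\<delta>'/\<delta>)"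
proof -
  define l where "l = \<delta>' / \<delta>"
  have l: "1 \<le> l" "l * \<delta> = \<delta>'" using assms by (simp_all add: l_def)
  define z where "z j = - (C $ j \<bullet> \<eta>) + d $ j" for j
  have termwise: "(1 + w $ j) * (Bhat \<delta> (z j) + ln (d $ j))
      \<le> (1 + w $ j) * (Bhat \<delta>' (z j) + ln (d $ j))
        + (1 + w $ j) * ln l + 2 * l * (l - 1) * ((1 + w $ j) * Bhat_tangent_gap \<delta>' (d $ j) (z j))" for j
    using mult_left_mono[OF Bhat_diff_rescaled_le[OF assms(1) l(1), of "d $ j" "z j"]
        one_plus_w_ge_one[THEN order_trans[OF zero_le_one]]] assms(3) l(2)
    by (simp add: algebra_simps)
  have "BhatP C d w \<delta> \<eta> \<le> (\<Sum>j\<in>UNIV. (1 + w $ j) * (Bhat \<delta>' (z j) + ln (d $ j))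
        + (1 + w $ j) * ln l + 2 * l * (l - 1) * ((1 + w $ j) * Bhat_tangent_gap \<delta>' (d $ j) (z j)))"
    unfolding BhatP_def z_def[symmetric] by (rule sum_mono) (rule termwise)
  also have "\<dots> = (\<Sum>j\<in>UNIV. (1 + w $ j) * (Bhat \<delta>' (z j) + ln (d $ j)))
      + (\<Sum>j\<in>UNIV. (1 + w $ j) * ln l)
      + (\<Sum>j\<in>UNIV. 2 * l * (l - 1) * ((1 + w $ j) * Bhat_tangent_gap \<delta>' (d $ j) (z j)))"
    by (simp only: sum.distrib)
  also have "\<dots> = (\<Sum>j\<in>UNIV. (1 + w $ j) * (Bhat \<delta>' (z j) + ln (d $ j)))
      + (\<Sum>j\<in>UNIV. 1 + w $ j) * ln l
      + 2 * l * (l - 1) * (\<Sum>j\<in>UNIV. (1 + w $ j) * Bhat_tangent_gap \<delta>' (d $ j) (z j))"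
    by (simp only: sum_distrib_left sum_distrib_right)
  finally show ?thesis
    unfolding BhatP_def[of C d w \<delta>' \<eta>, symmetric] z_def BhatP_eq_sum_tangent_gap[of \<delta>' \<eta>, symmetric]
      l_def[symmetric]
    by (simp add: algebra_simps)
qed

lemma betabar_le_BhatP:
  assumes "0 < \<delta>" "\<And>i. \<delta> \<le> d $ i" "C $ i \<bullet> \<xi> = d $ i"
  shows "betabar C d w \<delta> \<le> BhatP C d w \<delta> \<xi>"
  unfolding betabar_def
  by (rule cInf_lower) (use assms BhatP_nonneg[OF assms(1,2)] in \<open>auto intro: bdd_belowI[of _ 0]\<close>)

lemma le_betabar:
  assumes "C $ i0 \<bullet> \<xi>0 = d $ i0" "\<And>i \<xi>. C $ i \<bullet> \<xi> = d $ i \<Longrightarrow> y \<le> BhatP C d w \<delta> \<xi>"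
  shows "y \<le> betabar C d w \<delta>"
  unfolding betabar_def by (rule cInf_greatest) (use assms in auto)

lemma sublevel_subset_polytope:
  assumes "0 < \<delta>" "\<And>i. \<delta> \<le> d $ i" "BhatP C d w \<delta> \<xi> \<le> betabar C d w \<delta>"
  shows "\<xi> \<in> polytope C d"
proof (rule ccontr)
  assume "\<xi> \<notin> polytope C d"
  then obtain i where i: "d $ i < C $ i \<bullet> \<xi>" by (auto simp: polytope_def not_le)
  define t where "t = d $ i / (C $ i \<bullet> \<xi>)"
  have t: "0 < t" "t < 1" using i d_pos[of i] by (auto simp: t_def)
  have facet: "C $ i \<bullet> (t *\<^sub>R \<xi>) = d $ i" using i d_pos[of i] by (simp add: t_def)
  have "BhatP C d w \<delta> (t *\<^sub>R \<xi>) \<le> t * BhatP C d w \<delta> \<xi>"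
    using t by (intro BhatP_scaleR_le[OF assms(1,2)]) auto
  also have "\<dots> \<le> t * BhatP C d w \<delta> (t *\<^sub>R \<xi>)"
    using assms(3) betabar_le_BhatP[OF assms(1,2) facet] t by simp
  finally have "(1 - t) * BhatP C d w \<delta> (t *\<^sub>R \<xi>) \<le> 0" by (simp add: algebra_simps)
  moreover have "0 < (1 - t) * BhatP C d w \<delta> (t *\<^sub>R \<xi>)"
    using t BhatP_on_facet_ge_half[OF assms(1,2) facet] by simp
  ultimately show False by simp
qed

lemma continuous_on_betabar: "continuous_on {0<..Min (range (\<lambda>i. d $ i))} (betabar C d w)"
proof (cases "\<exists>i \<xi>. C $ i \<bullet> \<xi> = d $ i")
  case False
  then have "betabar C d w = (\<lambda>_. Inf {})" by (auto simp: betabar_def fun_eq_iff)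
  then show ?thesis by simp
next
  case True
  then obtain i0 \<xi>0 where facet: "C $ i0 \<bullet> \<xi>0 = d $ i0" by blast
  show ?thesis
  proof (rule continuous_on_from_rescaling_bound)
    fix a b assume "a \<in> {0<..Min (range (\<lambda>i. d $ i))}" "b \<in> {0<..Min (range (\<lambda>i. d $ i))}" "a \<le> b"
    then have a: "0 < a" "\<And>i. a \<le> d $ i" and b: "0 < b" "\<And>i. b \<le> d $ i" and "a \<le> b"
      by (auto simp: admissible_delta_iff)
    show "betabar C d w b \<le> betabar C d w a"
      using betabar_le_BhatP[OF b] BhatP_antimono_delta[OF a(1) \<open>a \<le> b\<close>]
      by (intro le_betabar[OF facet]) (meson order_trans)
    define A where "A = 1 + 2 * (b/a) * (b/a - 1)"
    have "1 \<le> b/a" using a \<open>a \<le> b\<close> by simp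
    then have "0 < A" unfolding A_def by (smt (verit) mult_nonneg_nonneg)
    have "(betabar C d w a - (\<Sum>j\<in>UNIV. 1 + w $ j) * ln (b/a)) / A \<le> betabar C d w b"
    proof (rule le_betabar[OF facet])
      fix i \<xi> assume "C $ i \<bullet> \<xi> = d $ i"
      then have "betabar C d w a \<le> A * BhatP C d w b \<xi> + (\<Sum>j\<in>UNIV. 1 + w $ j) * ln (b/a)"
        unfolding A_def
        using betabar_le_BhatP[OF a] BhatP_rescaled_bound[OF a(1) \<open>a \<le> b\<close> b(2)] by (blast intro: order_trans)
      then show "(betabar C d w a - (\<Sum>j\<in>UNIV. 1 + w $ j) * ln (b/a)) / A \<le> BhatP C d w b \<xi>"
        using \<open>0 < A\<close> by (simp add: pos_divide_le_eq mult.commute)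
    qed
    then show "betabar C d w a \<le> A * betabar C d w b + (\<Sum>j\<in>UNIV. 1 + w $ j) * ln (b/a)"
      using \<open>0 < A\<close> by (simp add: divide_le_eq mult.commute)
  next
    fix a assume "a \<in> {0<..Min (range (\<lambda>i. d $ i))}"
    then show "0 \<le> betabar C d w a"
      by (intro le_betabar[OF facet] BhatP_nonneg) (auto simp: admissible_delta_iff)
  qed (use one_plus_w_ge_one in \<open>auto intro: sum_nonneg order_trans[OF zero_le_one]\<close>)
qed

end

theorem lemma2:
  fixes C :: "real^'r^'q" and d :: "real^'q" and w :: "real^'q"
  assumes "compact (polytope C d)"
    and "\<forall>i. d $ i > 0"
    and "\<forall>i. w $ i \<ge> 0"
    and "transpose C *v (\<chi> i. (1 / d $ i) * (1 + w $ i)) = 0"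
  shows "continuous_on {0<..Min (range (\<lambda>i. d $ i))} (betabar C d w)
    \<and> (\<forall>\<delta>\<in>{0<..Min (range (\<lambda>i. d $ i))}.
          {\<xi>. BhatP C d w \<delta> \<xi> \<le> betabar C d w \<delta>} \<subseteq> polytope C d)"
proof -
  interpret facet_barrier C d w
    using assms(2-4) by unfold_locales auto
  show ?thesis
    using continuous_on_betabar sublevel_subset_polytope by (auto simp: admissible_delta_iff)
qed

end
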